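(* Let $(S,T,\alpha,\beta)$ be a matched product system of left inverse semi-braces. Then $S\times T$ with the operations $$(a,u)+(b,v)=(a+b,\,u+v),\qquad (a,u)(b,v)=\left(\alpha_u(\alpha_u^{-1}(a)\,b),\ \beta_a(\beta_a^{-1}(u)\,v)\right)$$ for all $(a,u),(b,v)\in S\times T$, is a left inverse semi-brace (called the matched product $S\bowtie T$).
   Context: An inverse semigroup is a semigroup $(S,\cdot)$ in which for each $a$ there is a unique $a^{-1}$ with $aa^{-1}a=a$, $a^{-1}aa^{-1}=a^{-1}$. A left inverse semi-brace is a triple $(S,+,\cdot)$ with $(S,+)$ a semigroup, $(S,\cdot)$ an inverse semigroup and $a(b+c)=ab+a(a^{-1}+c)$ for all $a,b,c$. A matched product system of left inverse semi-braces is a quadruple $(S,T,\alpha,\beta)$ where $S,T$ are left inverse semi-braces, $\alpha:T\to\mathrm{Aut}(S,+)$ is a homomorphism of inverse semigroups from $(T,\cdot)$ into the automorphism group of $(S,+)$, $\beta:S\to\mathrm{Aut}(T,+)$ is a homomorphism of inverse semigroups from $(S,\cdot)$ into the automorphism group of $(T,+)$ (write $\alpha_u=\alpha(u)$, $\beta_a=\beta(a)$, and $\alpha_u^{-1},\beta_a^{-1}$ for the inverse maps), such that for all $a,b\in S$, $u,v\in T$: $\alpha_u(\alpha_u^{-1}(a)\,b)=a\,\alpha_{\beta_a^{-1}(u)}(b)$ and $\beta_a(\beta_a^{-1}(u)\,v)=u\,\beta_{\alpha_u^{-1}(a)}(v)$; and if $\alpha_u(\alpha_u^{-1}(a)\,a)=a$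 and $\beta_a(\beta_a^{-1}(u)\,u)=u$, then $\alpha_u(a)=a$ and $\beta_a(u)=u$. *)

theory Defs
  imports Main
begin

text \<open>Structures are given on whole types; operations are passed explicitly.\<close>

definition is_semigroup :: "('a \<Rightarrow> 'a \<Rightarrow> 'a) \<Rightarrow> bool" where
  "is_semigroup f \<longleftrightarrow> (\<forall>x y z. f (f x y) z = f x (f y z))"

definition inverse_semigroup :: "('a \<Rightarrow> 'a \<Rightarrow> 'a) \<Rightarrow> bool" where
  "inverse_semigroup m \<longleftrightarrow> is_semigroup m \<and>
     (\<forall>a. \<exists>!b. m (m a b) a = a \<and> m (m b a) b = b)"

definition sg_inv :: "('a \<Rightarrow> 'a \<Rightarrow> 'a) \<Rightarrow> 'a \<Rightarrow> 'a" where
  "sg_inv m a = (THE b. m (m a b) a = a \<and> m (m b a) b = b)"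

definition left_inverse_semi_brace :: "('a \<Rightarrow> 'a \<Rightarrow> 'a) \<Rightarrow> ('a \<Rightarrow> 'a \<Rightarrow> 'a) \<Rightarrow> bool" where
  "left_inverse_semi_brace add m \<longleftrightarrow> is_semigroup add \<and> inverse_semigroup m \<and>
     (\<forall>a b c. m a (add b c) = add (m a b) (m a (add (sg_inv m a) c)))"

definition is_add_aut :: "('a \<Rightarrow> 'a \<Rightarrow> 'a) \<Rightarrow> ('a \<Rightarrow> 'a) \<Rightarrow> bool" where
  "is_add_aut add f \<longleftrightarrow> bij f \<and> (\<forall>x y. f (add x y) = add (f x) (f y))"

definition aut_hom :: "('b \<Rightarrow> 'b \<Rightarrow> 'b) \<Rightarrow> ('a \<Rightarrow> 'a \<Rightarrow> 'a) \<Rightarrow> ('b \<Rightarrow> 'a \<Rightarrow> 'a) \<Rightarrow> bool" where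
  "aut_hom mT addS \<alpha> \<longleftrightarrow> (\<forall>u. is_add_aut addS (\<alpha> u)) \<and>
     (\<forall>u v. \<alpha> (mT u v) = \<alpha> u \<circ> \<alpha> v)"

definition matched_product_system ::
  "('a \<Rightarrow> 'a \<Rightarrow> 'a) \<Rightarrow> ('a \<Rightarrow> 'a \<Rightarrow> 'a) \<Rightarrow> ('b \<Rightarrow> 'b \<Rightarrow> 'b) \<Rightarrow> ('b \<Rightarrow> 'b \<Rightarrow> 'b)
   \<Rightarrow> ('b \<Rightarrow> 'a \<Rightarrow> 'a) \<Rightarrow> ('a \<Rightarrow> 'b \<Rightarrow> 'b) \<Rightarrow> bool" where
  "matched_product_system addS mS addT mT \<alpha> \<beta> \<longleftrightarrow>
     left_inverse_semi_brace addS mS \<and> left_inverse_semi_brace addT mT \<and>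
     aut_hom mT addS \<alpha> \<and> aut_hom mS addT \<beta> \<and>
     (\<forall>a b u. \<alpha> u (mS (inv (\<alpha> u) a) b) = mS a (\<alpha> (inv (\<beta> a) u) b)) \<and>
     (\<forall>a u v. \<beta> a (mT (inv (\<beta> a) u) v) = mT u (\<beta> (inv (\<alpha> u) a) v)) \<and>
     (\<forall>a u. \<alpha> u (mS (inv (\<alpha> u) a) a) = a \<and> \<beta> a (mT (inv (\<beta> a) u) u) = u
        \<longrightarrow> \<alpha> u a = a \<and> \<beta> a u = u)"

end

theory Submission imports Defs begin

text \<open>Both components of the product in \<open>S \<bowtie> T\<close> are twisted multiplications
  \<open>\<alpha>\<^sub>u(\<alpha>\<^sub>u\<^sup>-\<^sup>1(a) b)\<close>, and the first compatibility axiom rewrites such a product as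
  \<open>a \<alpha>\<^bsub>\<beta>\<^sub>a\<^sup>-\<^sup>1(u)\<^esub>(b)\<close>. With this rewriting, associativity and the brace law of
  \<open>S \<bowtie> T\<close> reduce componentwise to those of \<open>S\<close> and \<open>T\<close>; the roles of the two
  components are exchanged by swapping \<open>(S, \<alpha>)\<close> and \<open>(T, \<beta>)\<close>.
  For the inverse semigroup structure, \<open>(\<alpha>\<^bsub>\<beta>\<^sub>a\<^sup>-\<^sup>1(u)\<^esub>\<^sup>-\<^sup>1(a\<^sup>-\<^sup>1), \<beta>\<^bsub>\<alpha>\<^sub>u\<^sup>-\<^sup>1(a)\<^esub>\<^sup>-\<^sup>1(u\<^sup>-\<^sup>1))\<close>
  is an inverse of \<open>(a, u)\<close>. The last axiom makes every idempotent of \<open>S \<bowtie> T\<close> a pair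
  of idempotents; idempotents act trivially, so on them the product is componentwise
  and idempotents commute. A regular semigroup with commuting idempotents is inverse.\<close>

section \<open>Inverse semigroups\<close>

lemma is_semigroupD: "is_semigroup m \<Longrightarrow> m (m x y) z = m x (m y z)"
  unfolding is_semigroup_def by blast

lemma inverse_semigroup_is_semigroup: "inverse_semigroup m \<Longrightarrow> is_semigroup m"
  unfolding inverse_semigroup_def by blast

lemma inverse_semigroup_assoc: "inverse_semigroup m \<Longrightarrow> m (m x y) z = m x (m y z)"
  by (rule is_semigroupD[OF inverse_semigroup_is_semigroup])

lemma sg_inv_regular:
  assumes "inverse_semigroup m"
  shows "m (m a (sg_inv m a)) a = a" and "m (m (sg_inv m a) a) (sg_inv m a) = sg_inv m a"
proof -
  have "\<exists>!b. m (m a b) a = a \<and> m (m b a) b = b"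
    using assms unfolding inverse_semigroup_def by blast
  from theI'[OF this] show "m (m a (sg_inv m a)) a = a"
    and "m (m (sg_inv m a) a) (sg_inv m a) = sg_inv m a"
    unfolding sg_inv_def by auto
qed

lemma sg_inv_eqI:
  assumes "inverse_semigroup m" and "m (m a b) a = a" and "m (m b a) b = b"
  shows "sg_inv m a = b"
proof -
  have "\<exists>!b. m (m a b) a = a \<and> m (m b a) b = b"
    using assms(1) unfolding inverse_semigroup_def by blast
  then show ?thesis
    unfolding sg_inv_def using assms(2,3) by (simp add: the1_equality)
qed

lemma mult_sg_inv_idempotent:
  assumes "inverse_semigroup m"
  shows "m (m a (sg_inv m a)) (m a (sg_inv m a)) = m a (sg_inv m a)"
  using sg_inv_regular[OF assms, of a] inverse_semigroup_assoc[OF assms] by metis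

lemma inverse_semigroup_idempotent_mult:
  assumes I: "inverse_semigroup m" and e: "m e e = e" and f: "m f f = f"
  shows "m (m e f) (m e f) = m e f"
proof -
  note A = inverse_semigroup_assoc[OF I]
  define x where "x = sg_inv m (m e f)"
  have x1: "m (m (m e f) x) (m e f) = m e f" and x2: "m (m x (m e f)) x = x"
    unfolding x_def by (fact sg_inv_regular[OF I])+
  txt \<open>\<open>f x e\<close> is another inverse of \<open>e f\<close>, hence equal to \<open>x\<close>; so \<open>x\<close> is idempotent
    and therefore its own inverse, while \<open>e f\<close> is its inverse as well.\<close>
  have "m (m (m e f) (m f (m x e))) (m e f) = m e f"
    using x1 e f A by metis
  moreover have "m (m (m f (m x e)) (m e f)) (m f (m x e)) = m f (m x e)"
    using x2 e f A by metis
  ultimately have fxe: "m f (m x e) = x"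
    unfolding x_def by (rule sg_inv_eqI[OF I, symmetric])
  have "m x x = m f (m (m (m x (m e f)) x) e)"
    using fxe e f A by metis
  then have xx: "m x x = x"
    using x2 fxe by simp
  have "sg_inv m x = x"
    using sg_inv_eqI[OF I] xx by simp
  moreover have "sg_inv m x = m e f"
    using sg_inv_eqI[OF I] x1 x2 by simp
  ultimately show ?thesis
    using xx by simp
qed

lemma inverse_semigroup_idempotents_commute:
  assumes I: "inverse_semigroup m" and e: "m e e = e" and f: "m f f = f"
  shows "m e f = m f e"
proof -
  note A = inverse_semigroup_assoc[OF I]
  have "m (m (m e f) (m f e)) (m e f) = m e f"
    using inverse_semigroup_idempotent_mult[OF I e f] e f A by metis
  moreover have "m (m (m f e) (m e f)) (m f e) = m f e"
    using inverse_semigroup_idempotent_mult[OF I f e] e f A by metis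
  ultimately have "sg_inv m (m e f) = m f e"
    by (rule sg_inv_eqI[OF I])
  moreover have "sg_inv m (m e f) = m e f"
    using sg_inv_eqI[OF I] inverse_semigroup_idempotent_mult[OF I e f] by simp
  ultimately show ?thesis
    by simp
qed

lemma inverse_unique_if_idempotents_commute:
  assumes S: "is_semigroup m"
    and C: "\<And>e f. m e e = e \<Longrightarrow> m f f = f \<Longrightarrow> m e f = m f e"
    and x1: "m (m a x) a = a" and x2: "m (m x a) x = x"
    and y1: "m (m a y) a = a" and y2: "m (m y a) y = y"
  shows "x = y"
proof -
  note A = is_semigroupD[OF S]
  have xa: "m (m x a) (m x a) = m x a" and ya: "m (m y a) (m y a) = m y a"
    using x2 y2 A by metis+
  have ax: "m (m a x) (m a x) = m a x" and ay: "m (m a y) (m a y) = m a y"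
    using x1 y1 A by metis+
  have "x = m (m x a) x" using x2 by simp
  also have "\<dots> = m (m (m x a) (m y a)) x" using y1 A by metis
  also have "\<dots> = m (m (m y a) (m x a)) x" using C[OF xa ya] by simp
  also have "\<dots> = m y (m a x)" using x2 A by metis
  also have "\<dots> = m y (m (m a y) (m a x))" using y2 A by metis
  also have "\<dots> = m y (m (m a x) (m a y))" using C[OF ax ay] by simp
  also have "\<dots> = y" using x1 y2 A by metis
  finally show ?thesis .
qed

lemma inverse_semigroupI:
  assumes S: "is_semigroup m"
    and C: "\<And>e f. m e e = e \<Longrightarrow> m f f = f \<Longrightarrow> m e f = m f e"
    and J: "\<And>a. m (m a (J a)) a = a" "\<And>a. m (m (J a) a) (J a) = J a"
  shows "inverse_semigroup m"
  unfolding inverse_semigroup_def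
  using S inverse_unique_if_idempotents_commute[OF S C] J by blast

section \<open>Actions by additive automorphisms\<close>

lemma aut_hom_bij: "aut_hom m add \<alpha> \<Longrightarrow> bij (\<alpha> u)"
  unfolding aut_hom_def is_add_aut_def by blast

lemma aut_hom_add: "aut_hom m add \<alpha> \<Longrightarrow> \<alpha> u (add x y) = add (\<alpha> u x) (\<alpha> u y)"
  unfolding aut_hom_def is_add_aut_def by blast

lemma aut_hom_mult: "aut_hom m add \<alpha> \<Longrightarrow> \<alpha> (m u v) x = \<alpha> u (\<alpha> v x)"
  unfolding aut_hom_def by simp

lemma aut_hom_f_inv_f: "aut_hom m add \<alpha> \<Longrightarrow> \<alpha> u (inv (\<alpha> u) x) = x"
  by (meson aut_hom_bij bij_is_surj surj_f_inv_f)

lemma aut_hom_inv_f_f: "aut_hom m add \<alpha> \<Longrightarrow> inv (\<alpha> u) (\<alpha> u x) = x"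
  by (meson aut_hom_bij bij_is_inj inv_f_f)

lemma aut_hom_eq_iff: "aut_hom m add \<alpha> \<Longrightarrow> \<alpha> u x = \<alpha> u y \<longleftrightarrow> x = y"
  by (metis aut_hom_inv_f_f)

lemma aut_hom_idempotent:
  assumes H: "aut_hom m add \<alpha>" and f: "m f f = f"
  shows "\<alpha> f x = x"
proof -
  have "\<alpha> f (\<alpha> f x) = \<alpha> f x"
    using aut_hom_mult[OF H, of f f x] f by simp
  then show ?thesis
    by (simp add: aut_hom_eq_iff[OF H])
qed

lemma aut_hom_inv_idempotent:
  assumes H: "aut_hom m add \<alpha>" and f: "m f f = f"
  shows "inv (\<alpha> f) x = x"
  using aut_hom_inv_f_f[OF H, of f x] aut_hom_idempotent[OF H f] by simp

lemma aut_hom_sg_inv: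
  assumes H: "aut_hom m add \<alpha>" and I: "inverse_semigroup m"
  shows "\<alpha> (sg_inv m u) = inv (\<alpha> u)"
proof
  fix x
  have "\<alpha> u (\<alpha> (sg_inv m u) x) = x"
    using aut_hom_idempotent[OF H mult_sg_inv_idempotent[OF I]] aut_hom_mult[OF H] by metis
  then show "\<alpha> (sg_inv m u) x = inv (\<alpha> u) x"
    using aut_hom_inv_f_f[OF H] by metis
qed

lemma aut_hom_inv_sg_inv:
  assumes H: "aut_hom m add \<alpha>" and I: "inverse_semigroup m"
  shows "inv (\<alpha> (sg_inv m u)) x = \<alpha> u x"
  using aut_hom_sg_inv[OF H I] aut_hom_bij[OF H] inv_inv_eq by metis

lemma aut_hom_inv_mult:
  assumes H: "aut_hom m add \<alpha>"
  shows "inv (\<alpha> (m s t)) x = inv (\<alpha> t) (inv (\<alpha> s) x)"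
proof -
  have "\<alpha> (m s t) (inv (\<alpha> t) (inv (\<alpha> s) x)) = x"
    using aut_hom_mult[OF H] aut_hom_f_inv_f[OF H] by metis
  then show ?thesis
    using aut_hom_inv_f_f[OF H] by metis
qed

section \<open>The components of the matched product\<close>

definition twisted_mult :: "('a \<Rightarrow> 'a \<Rightarrow> 'a) \<Rightarrow> ('b \<Rightarrow> 'a \<Rightarrow> 'a) \<Rightarrow> 'b \<Rightarrow> 'a \<Rightarrow> 'a \<Rightarrow> 'a"
  where "twisted_mult m \<alpha> u a b = \<alpha> u (m (inv (\<alpha> u) a) b)"

definition twisted_inv ::
  "('a \<Rightarrow> 'a \<Rightarrow> 'a) \<Rightarrow> ('b \<Rightarrow> 'a \<Rightarrow> 'a) \<Rightarrow> ('a \<Rightarrow> 'b \<Rightarrow> 'b) \<Rightarrow> 'a \<Rightarrow> 'b \<Rightarrow> 'a"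
  where "twisted_inv m \<alpha> \<beta> a u = inv (\<alpha> (inv (\<beta> a) u)) (sg_inv m a)"

lemma twisted_mult_idempotent:
  assumes "aut_hom mT add \<alpha>" and "mT f f = f"
  shows "twisted_mult m \<alpha> f e g = m e g"
  unfolding twisted_mult_def
  using aut_hom_idempotent[OF assms] aut_hom_inv_idempotent[OF assms] by simp

lemma matched_product_system_swap:
  "matched_product_system addS mS addT mT \<alpha> \<beta> \<Longrightarrow> matched_product_system addT mT addS mS \<beta> \<alpha>"
  unfolding matched_product_system_def by blast

context
  fixes addS mS :: "'a \<Rightarrow> 'a \<Rightarrow> 'a" and addT mT :: "'b \<Rightarrow> 'b \<Rightarrow> 'b"
    and \<alpha> :: "'b \<Rightarrow> 'a \<Rightarrow> 'a" and \<beta> :: "'a \<Rightarrow> 'b \<Rightarrow> 'b"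
  assumes M: "matched_product_system addS mS addT mT \<alpha> \<beta>"
begin

lemma mps_brace_S: "left_inverse_semi_brace addS mS"
  using M unfolding matched_product_system_def by blast

lemma mps_inverse_S: "inverse_semigroup mS"
  using mps_brace_S unfolding left_inverse_semi_brace_def by blast

lemma mps_inverse_T: "inverse_semigroup mT"
  using M unfolding matched_product_system_def left_inverse_semi_brace_def by blast

private lemma assoc_S: "mS (mS x y) z = mS x (mS y z)"
  by (rule inverse_semigroup_assoc[OF mps_inverse_S])

lemma mps_hom_\<alpha>: "aut_hom mT addS \<alpha>"
  using M unfolding matched_product_system_def by blast

lemma mps_hom_\<beta>: "aut_hom mS addT \<beta>"
  using M unfolding matched_product_system_def by blast

lemma twisted_mult_eq: "twisted_mult mS \<alpha> u a b = mS a (\<alpha> (inv (\<beta> a) u) b)"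
  using M unfolding matched_product_system_def twisted_mult_def by blast

private lemma twisted_mult_eq_T: "twisted_mult mT \<beta> a u v = mT u (\<beta> (inv (\<alpha> u) a) v)"
  using M unfolding matched_product_system_def twisted_mult_def by blast

lemma mps_action_mult: "\<alpha> t (mS y z) = mS (\<alpha> t y) (\<alpha> (inv (\<beta> (\<alpha> t y)) t) z)"
  using twisted_mult_eq[of t "\<alpha> t y" z]
  unfolding twisted_mult_def by (simp add: aut_hom_inv_f_f[OF mps_hom_\<alpha>])

lemma twisted_mult_assoc:
  "twisted_mult mS \<alpha> (twisted_mult mT \<beta> a u v) (twisted_mult mS \<alpha> u a b) d
     = twisted_mult mS \<alpha> u a (twisted_mult mS \<alpha> v b d)"
proof -
  define u' where "u' = inv (\<beta> a) u"
  define x where "x = \<alpha> u' b"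
  define c where "c = twisted_mult mS \<alpha> u a b"
  have c: "c = mS a x"
    unfolding c_def x_def u'_def by (rule twisted_mult_eq)
  have x: "\<alpha> (mT u' v) (inv (\<alpha> v) b) = x"
    unfolding x_def by (simp add: aut_hom_mult[OF mps_hom_\<alpha>] aut_hom_f_inv_f[OF mps_hom_\<alpha>])
  have "twisted_mult mS \<alpha> u a (twisted_mult mS \<alpha> v b d)
      = mS a (\<alpha> u' (\<alpha> v (mS (inv (\<alpha> v) b) d)))"
    unfolding u'_def by (simp only: twisted_mult_eq[of u a] twisted_mult_def[of _ _ v])
  also have "\<dots> = mS a (\<alpha> (mT u' v) (mS (inv (\<alpha> v) b) d))"
    by (simp add: aut_hom_mult[OF mps_hom_\<alpha>])
  also have "\<dots> = mS a (mS x (\<alpha> (inv (\<beta> x) (mT u' v)) d))"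
    using mps_action_mult[of "mT u' v" "inv (\<alpha> v) b" d] x by simp
  also have "\<dots> = mS c (\<alpha> (inv (\<beta> x) (mT u' v)) d)"
    by (simp add: c assoc_S)
  also have "inv (\<beta> x) (mT u' v) = inv (\<beta> c) (twisted_mult mT \<beta> a u v)"
    unfolding c twisted_mult_def u'_def
    by (simp add: aut_hom_inv_mult[OF mps_hom_\<beta>] aut_hom_inv_f_f[OF mps_hom_\<beta>])
  also have "mS c (\<alpha> (inv (\<beta> c) (twisted_mult mT \<beta> a u v)) d)
      = twisted_mult mS \<alpha> (twisted_mult mT \<beta> a u v) c d"
    by (simp add: twisted_mult_eq)
  finally show ?thesis
    unfolding c_def by simp
qed

lemma idempotent_if_twisted_idempotent:
  assumes "twisted_mult mS \<alpha> u a a = a" and "twisted_mult mT \<beta> a u u = u"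
  shows "mS a a = a"
proof -
  have fixed: "\<alpha> u a = a"
    using M assms unfolding matched_product_system_def twisted_mult_def by blast
  then have "inv (\<alpha> u) a = a"
    using aut_hom_inv_f_f[OF mps_hom_\<alpha>] by metis
  then have "\<alpha> u (mS a a) = \<alpha> u a"
    using assms(1) fixed unfolding twisted_mult_def by simp
  then show ?thesis
    by (simp only: aut_hom_eq_iff[OF mps_hom_\<alpha>])
qed

lemma twisted_mult_twisted_inv:
  "twisted_mult mS \<alpha> u a (twisted_inv mS \<alpha> \<beta> a u) = mS a (sg_inv mS a)"
  unfolding twisted_mult_eq twisted_inv_def by (simp add: aut_hom_f_inv_f[OF mps_hom_\<alpha>])

lemma twisted_inv_twisted_mult:
  "twisted_mult mS \<alpha> (twisted_inv mT \<beta> \<alpha> u a) (twisted_inv mS \<alpha> \<beta> a u) (mS a (sg_inv mS a))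
     = twisted_inv mS \<alpha> \<beta> a u"
proof -
  define b where "b = twisted_inv mS \<alpha> \<beta> a u"
  define v where "v = twisted_inv mT \<beta> \<alpha> u a"
  define p where "p = inv (\<alpha> v) b"
  define t where "t = mT (inv (\<beta> a) u) v"
  define e where "e = mS a (sg_inv mS a)"
  have tp: "\<alpha> t p = sg_inv mS a"
    unfolding t_def p_def b_def twisted_inv_def
    using aut_hom_mult[OF mps_hom_\<alpha>] aut_hom_f_inv_f[OF mps_hom_\<alpha>] by metis
  have "\<beta> a t = mT u (sg_inv mT u)"
    unfolding t_def v_def twisted_inv_def
    using twisted_mult_eq_T aut_hom_f_inv_f[OF mps_hom_\<beta>] unfolding twisted_mult_def by metis
  then have "inv (\<beta> (sg_inv mS a)) t = mT u (sg_inv mT u)"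
    by (simp add: aut_hom_inv_sg_inv[OF mps_hom_\<beta> mps_inverse_S])
  then have "\<alpha> t (mS p e) = mS (sg_inv mS a) e"
    using mps_action_mult[of t p e] tp
      aut_hom_idempotent[OF mps_hom_\<alpha> mult_sg_inv_idempotent[OF mps_inverse_T]] by metis
  also have "\<dots> = \<alpha> t p"
    unfolding tp e_def using sg_inv_regular(2)[OF mps_inverse_S] by (simp add: assoc_S)
  finally have "mS p e = p"
    by (simp add: aut_hom_eq_iff[OF mps_hom_\<alpha>])
  then show ?thesis
    unfolding b_def[symmetric] v_def[symmetric] e_def[symmetric] twisted_mult_def p_def
    by (simp add: aut_hom_f_inv_f[OF mps_hom_\<alpha>])
qed

lemma twisted_mult_brace:
  "twisted_mult mS \<alpha> u a (addS b c)
     = addS (twisted_mult mS \<alpha> u a b)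
            (twisted_mult mS \<alpha> u a (addS (twisted_inv mS \<alpha> \<beta> a u) c))"
proof -
  have "mS a (addS x y) = addS (mS a x) (mS a (addS (sg_inv mS a) y))" for x y
    using mps_brace_S unfolding left_inverse_semi_brace_def by blast
  then show ?thesis
    unfolding twisted_mult_eq twisted_inv_def
      aut_hom_add[OF mps_hom_\<alpha>] aut_hom_f_inv_f[OF mps_hom_\<alpha>] .
qed

end

section \<open>The matched product\<close>

definition prod_add :: "('a \<Rightarrow> 'a \<Rightarrow> 'a) \<Rightarrow> ('b \<Rightarrow> 'b \<Rightarrow> 'b) \<Rightarrow> 'a \<times> 'b \<Rightarrow> 'a \<times> 'b \<Rightarrow> 'a \<times> 'b"
  where "prod_add addS addT = (\<lambda>(a, u) (b, v). (addS a b, addT u v))"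

definition matched_mult ::
  "('a \<Rightarrow> 'a \<Rightarrow> 'a) \<Rightarrow> ('b \<Rightarrow> 'b \<Rightarrow> 'b) \<Rightarrow> ('b \<Rightarrow> 'a \<Rightarrow> 'a) \<Rightarrow> ('a \<Rightarrow> 'b \<Rightarrow> 'b)
    \<Rightarrow> 'a \<times> 'b \<Rightarrow> 'a \<times> 'b \<Rightarrow> 'a \<times> 'b"
  where "matched_mult mS mT \<alpha> \<beta> =
    (\<lambda>(a, u) (b, v). (twisted_mult mS \<alpha> u a b, twisted_mult mT \<beta> a u v))"

definition matched_inv ::
  "('a \<Rightarrow> 'a \<Rightarrow> 'a) \<Rightarrow> ('b \<Rightarrow> 'b \<Rightarrow> 'b) \<Rightarrow> ('b \<Rightarrow> 'a \<Rightarrow> 'a) \<Rightarrow> ('a \<Rightarrow> 'b \<Rightarrow> 'b)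
    \<Rightarrow> 'a \<times> 'b \<Rightarrow> 'a \<times> 'b"
  where "matched_inv mS mT \<alpha> \<beta> = (\<lambda>(a, u). (twisted_inv mS \<alpha> \<beta> a u, twisted_inv mT \<beta> \<alpha> u a))"

lemma prod_add_semigroup:
  "is_semigroup addS \<Longrightarrow> is_semigroup addT \<Longrightarrow> is_semigroup (prod_add addS addT)"
  unfolding is_semigroup_def prod_add_def by auto

context
  fixes addS mS :: "'a \<Rightarrow> 'a \<Rightarrow> 'a" and addT mT :: "'b \<Rightarrow> 'b \<Rightarrow> 'b"
    and \<alpha> :: "'b \<Rightarrow> 'a \<Rightarrow> 'a" and \<beta> :: "'a \<Rightarrow> 'b \<Rightarrow> 'b"
  assumes M: "matched_product_system addS mS addT mT \<alpha> \<beta>"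
begin

private lemmas M' = matched_product_system_swap[OF M]

private lemmas hom_\<alpha> = mps_hom_\<alpha>[OF M] and hom_\<beta> = mps_hom_\<beta>[OF M]
  and inverse_S = mps_inverse_S[OF M] and inverse_T = mps_inverse_T[OF M]

lemma matched_mult_semigroup: "is_semigroup (matched_mult mS mT \<alpha> \<beta>)"
  unfolding is_semigroup_def matched_mult_def
  by (simp add: twisted_mult_assoc[OF M] twisted_mult_assoc[OF M'])

lemma matched_mult_idempotentD:
  assumes "matched_mult mS mT \<alpha> \<beta> (a, u) (a, u) = (a, u)"
  shows "mS a a = a" and "mT u u = u"
  using assms idempotent_if_twisted_idempotent[OF M, of u a]
    idempotent_if_twisted_idempotent[OF M', of a u]
  unfolding matched_mult_def by simp_all

lemma matched_mult_idempotent: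
  assumes "mS a a = a" and "mT u u = u"
  shows "matched_mult mS mT \<alpha> \<beta> (a, u) (b, v) = (mS a b, mT u v)"
  unfolding matched_mult_def
  using twisted_mult_idempotent[OF hom_\<alpha> assms(2)] twisted_mult_idempotent[OF hom_\<beta> assms(1)]
  by simp

lemma matched_mult_idempotents_commute:
  assumes "matched_mult mS mT \<alpha> \<beta> x x = x" and "matched_mult mS mT \<alpha> \<beta> y y = y"
  shows "matched_mult mS mT \<alpha> \<beta> x y = matched_mult mS mT \<alpha> \<beta> y x"
proof -
  obtain a u b v where xy: "x = (a, u)" "y = (b, v)"
    by fastforce
  have idem: "mS a a = a" "mT u u = u" "mS b b = b" "mT v v = v"
    using matched_mult_idempotentD assms unfolding xy by metis+
  show ?thesis
    unfolding xy matched_mult_idempotent[OF idem(1,2)] matched_mult_idempotent[OF idem(3,4)]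
    using inverse_semigroup_idempotents_commute[OF inverse_S idem(1,3)]
      inverse_semigroup_idempotents_commute[OF inverse_T idem(2,4)] by simp
qed

lemma matched_mult_matched_inv:
  "matched_mult mS mT \<alpha> \<beta> x (matched_inv mS mT \<alpha> \<beta> x)
     = (mS (fst x) (sg_inv mS (fst x)), mT (snd x) (sg_inv mT (snd x)))"
  by (cases x) (simp add: matched_mult_def matched_inv_def
      twisted_mult_twisted_inv[OF M] twisted_mult_twisted_inv[OF M'])

lemma matched_inv_regular:
  shows "matched_mult mS mT \<alpha> \<beta> (matched_mult mS mT \<alpha> \<beta> x (matched_inv mS mT \<alpha> \<beta> x)) x = x"
    and "matched_mult mS mT \<alpha> \<beta> (matched_mult mS mT \<alpha> \<beta> (matched_inv mS mT \<alpha> \<beta> x) x)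
           (matched_inv mS mT \<alpha> \<beta> x) = matched_inv mS mT \<alpha> \<beta> x"
proof -
  obtain a u where x: "x = (a, u)"
    by fastforce
  show "matched_mult mS mT \<alpha> \<beta> (matched_mult mS mT \<alpha> \<beta> x (matched_inv mS mT \<alpha> \<beta> x)) x = x"
    unfolding matched_mult_matched_inv unfolding x
    by (simp add: matched_mult_idempotent mult_sg_inv_idempotent inverse_S inverse_T
        sg_inv_regular(1))
  have "matched_mult mS mT \<alpha> \<beta> (matched_inv mS mT \<alpha> \<beta> x)
          (matched_mult mS mT \<alpha> \<beta> x (matched_inv mS mT \<alpha> \<beta> x)) = matched_inv mS mT \<alpha> \<beta> x"
    unfolding matched_mult_matched_inv unfolding x
    by (simp add: matched_mult_def matched_inv_def
        twisted_inv_twisted_mult[OF M] twisted_inv_twisted_mult[OF M'])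
  then show "matched_mult mS mT \<alpha> \<beta> (matched_mult mS mT \<alpha> \<beta> (matched_inv mS mT \<alpha> \<beta> x) x)
      (matched_inv mS mT \<alpha> \<beta> x) = matched_inv mS mT \<alpha> \<beta> x"
    by (simp add: is_semigroupD[OF matched_mult_semigroup])
qed

lemma matched_mult_inverse_semigroup: "inverse_semigroup (matched_mult mS mT \<alpha> \<beta>)"
  by (rule inverse_semigroupI[OF matched_mult_semigroup matched_mult_idempotents_commute
        matched_inv_regular])

lemma sg_inv_matched_mult: "sg_inv (matched_mult mS mT \<alpha> \<beta>) x = matched_inv mS mT \<alpha> \<beta> x"
  by (rule sg_inv_eqI[OF matched_mult_inverse_semigroup matched_inv_regular])

lemma matched_mult_prod_add:
  "matched_mult mS mT \<alpha> \<beta> x (prod_add addS addT y z)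
     = prod_add addS addT (matched_mult mS mT \<alpha> \<beta> x y)
         (matched_mult mS mT \<alpha> \<beta> x (prod_add addS addT (matched_inv mS mT \<alpha> \<beta> x) z))"
proof -
  obtain a u b v d w where "x = (a, u)" and "y = (b, v)" and "z = (d, w)"
    by (metis prod.exhaust)
  then show ?thesis
    using twisted_mult_brace[OF M, of u a b d] twisted_mult_brace[OF M', of a u v w]
    by (simp add: matched_mult_def prod_add_def matched_inv_def)
qed

lemma matched_product_left_inverse_semi_brace:
  "left_inverse_semi_brace (prod_add addS addT) (matched_mult mS mT \<alpha> \<beta>)"
proof -
  have "is_semigroup addS" and "is_semigroup addT"
    using M unfolding matched_product_system_def left_inverse_semi_brace_def by blast+
  then show ?thesis
    unfolding left_inverse_semi_brace_def sg_inv_matched_mult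
    using prod_add_semigroup matched_mult_inverse_semigroup matched_mult_prod_add by blast
qed

end

theorem theorem24:
  fixes addS mS :: "'a \<Rightarrow> 'a \<Rightarrow> 'a" and addT mT :: "'b \<Rightarrow> 'b \<Rightarrow> 'b"
    and \<alpha> :: "'b \<Rightarrow> 'a \<Rightarrow> 'a" and \<beta> :: "'a \<Rightarrow> 'b \<Rightarrow> 'b"
  assumes "matched_product_system addS mS addT mT \<alpha> \<beta>"
  shows "left_inverse_semi_brace
           (\<lambda>(a, u) (b, v). (addS a b, addT u v))
           (\<lambda>(a, u) (b, v). (\<alpha> u (mS (inv (\<alpha> u) a) b), \<beta> a (mT (inv (\<beta> a) u) v)))"
  using matched_product_left_inverse_semi_brace[OF assms]
  unfolding prod_add_def matched_mult_def twisted_mult_def .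

end
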